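(* Let $t\ge 3$ be an integer, let $G$ be a graph not containing $K_{3,t}$ as a subgraph, let $D$ be a minimum dominating set of $G$, and let $\nabla$ be an integer with $\nabla>\nabla_1^B(G)$. Define $D_1=\{v\in V(G):$ for all $A\subseteq V(G)\setminus\{v\}$ with $N(v)\subseteq N[A]$ we have $|A|>2\nabla-1\}$, $\hat D=\{v\in V(G):$ for all $A\subseteq D\setminus\{v\}$ with $N(v)\subseteq N[A]$ we have $|A|>2\nabla-1\}$, $R_1=V(G)\setminus N[D_1]$ and $N_{R_1}(v)=N(v)\cap R_1$; for $v\in V(G)$ let $B_v=\{z\in V(G)\setminus\{v\}: |N_{R_1}(v)\cap N_{R_1}(z)|\ge(2\nabla-1)t+1\}$, and let $W=\{v\in V(G): B_v\neq\emptyset\}$. Then for every $v\in W$ and every set $A_v\subseteq V(G)\setminus\{v\}$ with $|A_v|\le 2\nabla-1$ and $N_{R_1}(v)\subseteq N[A_v]$ (such a set exists as $v\notin D_1$), we have $B_v\subseteq A_v$ (hence $|B_v|\le 2\nabla-1$); moreover, if $v\notin\hat D$, then $B_v\subseteq D$.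
   Context: Graphs are finite, undirected and simple. $N(v)$ is the open neighbourhood of $v$, $N[v]=N(v)\cup\{v\}$, $N[A]=\bigcup_{a\in A}N[a]$. A dominating set is a set $D$ with $N[D]=V(G)$. A $1$-shallow minor of $G$ is a graph obtained from $G$ by deleting vertices and edges and contracting pairwise vertex-disjoint connected subgraphs of radius at most $1$; $\nabla_1^B(G)$ is the maximum edge density $|E(H)|/|V(H)|$ of a bipartite $1$-shallow minor $H$ of $G$. $K_{3,t}$ is the complete bipartite graph with parts of sizes $3$ and $t$. *)

theory Defs
  imports Complex_Main
begin

definition sgraph :: "'a set \<Rightarrow> 'a set set \<Rightarrow> bool" where
  "sgraph V E \<longleftrightarrow> finite V \<and> (\<forall>e\<in>E. \<exists>u v. e = {u, v} \<and> u \<noteq> v \<and> u \<in> V \<and> v \<in> V)"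

definition nbh :: "'a set \<Rightarrow> 'a set set \<Rightarrow> 'a \<Rightarrow> 'a set" where
  "nbh V E v = {u\<in>V. {u, v} \<in> E}"

definition cnbh :: "'a set \<Rightarrow> 'a set set \<Rightarrow> 'a \<Rightarrow> 'a set" where
  "cnbh V E v = insert v (nbh V E v)"

definition cnbh_set :: "'a set \<Rightarrow> 'a set set \<Rightarrow> 'a set \<Rightarrow> 'a set" where
  "cnbh_set V E A = (\<Union>a\<in>A. cnbh V E a)"

definition dominating :: "'a set \<Rightarrow> 'a set set \<Rightarrow> 'a set \<Rightarrow> bool" where
  "dominating V E D \<longleftrightarrow> D \<subseteq> V \<and> cnbh_set V E D = V"

definition min_dominating :: "'a set \<Rightarrow> 'a set set \<Rightarrow> 'a set \<Rightarrow> bool" where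
  "min_dominating V E D \<longleftrightarrow> dominating V E D \<and>
     (\<forall>D'. dominating V E D' \<longrightarrow> card D \<le> card D')"

definition has_K3t :: "'a set \<Rightarrow> 'a set set \<Rightarrow> nat \<Rightarrow> bool" where
  "has_K3t V E t \<longleftrightarrow> (\<exists>X Y. X \<subseteq> V \<and> Y \<subseteq> V \<and> X \<inter> Y = {} \<and> card X = 3 \<and> card Y = t \<and>
       (\<forall>x\<in>X. \<forall>y\<in>Y. {x, y} \<in> E))"

text \<open>1-shallow minors, realised on branch sets: VH is a family of pairwise disjoint nonempty
  branch sets, each of which induces a connected subgraph of radius at most 1 (i.e. has a
  centre adjacent to all its other vertices); every edge of H joins two distinct branch sets
  between which G has an edge.  Every 1-shallow minor is isomorphic to such a graph.\<close>
definition shallow_minor1 :: "'a set \<Rightarrow> 'a set set \<Rightarrow> 'a set set \<Rightarrow> 'a set set set \<Rightarrow> bool" where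
  "shallow_minor1 V E VH EH \<longleftrightarrow>
     (\<forall>B\<in>VH. B \<noteq> {} \<and> B \<subseteq> V \<and> (\<exists>c\<in>B. B \<subseteq> cnbh V E c)) \<and>
     (\<forall>B1\<in>VH. \<forall>B2\<in>VH. B1 \<noteq> B2 \<longrightarrow> B1 \<inter> B2 = {}) \<and>
     (\<forall>e\<in>EH. \<exists>B1 B2. e = {B1, B2} \<and> B1 \<noteq> B2 \<and> B1 \<in> VH \<and> B2 \<in> VH \<and>
         (\<exists>x\<in>B1. \<exists>y\<in>B2. {x, y} \<in> E))"

definition bipartite :: "'b set \<Rightarrow> 'b set set \<Rightarrow> bool" where
  "bipartite VH EH \<longleftrightarrow> (\<exists>P. P \<subseteq> VH \<and> (\<forall>e\<in>EH. card (e \<inter> P) = 1))"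

definition nabla1B :: "'a set \<Rightarrow> 'a set set \<Rightarrow> real" where
  "nabla1B V E = Max {real (card EH) / real (card VH) | VH EH.
      shallow_minor1 V E VH EH \<and> bipartite VH EH \<and> VH \<noteq> {}}"

definition D1set :: "'a set \<Rightarrow> 'a set set \<Rightarrow> int \<Rightarrow> 'a set" where
  "D1set V E nabla = {v\<in>V. \<forall>A. A \<subseteq> V - {v} \<and> nbh V E v \<subseteq> cnbh_set V E A
                          \<longrightarrow> int (card A) > 2 * nabla - 1}"

definition Dhat :: "'a set \<Rightarrow> 'a set set \<Rightarrow> 'a set \<Rightarrow> int \<Rightarrow> 'a set" where
  "Dhat V E D nabla = {v\<in>V. \<forall>A. A \<subseteq> D - {v} \<and> nbh V E v \<subseteq> cnbh_set V E A
                          \<longrightarrow> int (card A) > 2 * nabla - 1}"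

definition R1set :: "'a set \<Rightarrow> 'a set set \<Rightarrow> int \<Rightarrow> 'a set" where
  "R1set V E nabla = V - cnbh_set V E (D1set V E nabla)"

definition NR1 :: "'a set \<Rightarrow> 'a set set \<Rightarrow> int \<Rightarrow> 'a \<Rightarrow> 'a set" where
  "NR1 V E nabla v = nbh V E v \<inter> R1set V E nabla"

definition Bset :: "'a set \<Rightarrow> 'a set set \<Rightarrow> int \<Rightarrow> nat \<Rightarrow> 'a \<Rightarrow> 'a set" where
  "Bset V E nabla t v = {z\<in>V - {v}.
      int (card (NR1 V E nabla v \<inter> NR1 V E nabla z)) \<ge> (2 * nabla - 1) * int t + 1}"

definition Wset :: "'a set \<Rightarrow> 'a set set \<Rightarrow> int \<Rightarrow> nat \<Rightarrow> 'a set" where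
  "Wset V E nabla t = {v\<in>V. Bset V E nabla t v \<noteq> {}}"

end

theory Submission
  imports Defs
begin

text \<open>Let \<open>k = 2\<nabla> - 1\<close>. If \<open>z \<in> B\<^sub>v\<close> but \<open>z \<notin> A\<^sub>v\<close>, then the more than \<open>k t\<close> common
  \<open>R\<^sub>1\<close>-neighbours of \<open>v\<close> and \<open>z\<close> are dominated by the at most \<open>k\<close> vertices of \<open>A\<^sub>v\<close>, so by
  pigeonhole some \<open>a \<in> A\<^sub>v\<close> dominates more than \<open>t\<close> of them, hence is adjacent to at least \<open>t\<close>
  of them; together with \<open>v\<close> and \<open>z\<close> this yields a \<open>K\<^sub>3\<^sub>,\<^sub>t\<close>. The bound \<open>|B\<^sub>v| \<le> k\<close> and the
  inclusion in \<open>D\<close> follow by choosing \<open>A\<^sub>v\<close> as a witness for \<open>v \<notin> D\<^sub>1\<close> resp. \<open>v \<notin> D\<close>. The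
  hypothesis on \<open>\<nabla>\<close> only serves to ensure \<open>k \<ge> 1\<close> (the one-vertex minor has density 0).\<close>

lemma shallow_minor1_subset_Pow:
  assumes "shallow_minor1 V E VH EH"
  shows "VH \<subseteq> Pow V" and "EH \<subseteq> Pow (Pow V)"
proof -
  have edges: "\<forall>e\<in>EH. \<exists>B1 B2. e = {B1, B2} \<and> B1 \<in> VH \<and> B2 \<in> VH"
    using assms unfolding shallow_minor1_def by (elim conjE) fast
  have "\<forall>B\<in>VH. B \<subseteq> V"
    using assms unfolding shallow_minor1_def by simp
  then show VH: "VH \<subseteq> Pow V"
    by auto
  show "EH \<subseteq> Pow (Pow V)"
  proof
    fix e
    assume "e \<in> EH"
    then obtain B1 B2 where "e = {B1, B2}" and "B1 \<in> VH" and "B2 \<in> VH"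
      using edges by auto
    then show "e \<in> Pow (Pow V)"
      using VH by auto
  qed
qed

lemma finite_shallow_minors1:
  assumes "finite V"
  shows "finite {(VH, EH). shallow_minor1 V E VH EH}"
proof (rule finite_subset)
  show "{(VH, EH). shallow_minor1 V E VH EH} \<subseteq> Pow (Pow V) \<times> Pow (Pow (Pow V))"
  proof
    fix p
    assume "p \<in> {(VH, EH). shallow_minor1 V E VH EH}"
    then obtain VH EH where "p = (VH, EH)" and "shallow_minor1 V E VH EH"
      by auto
    then show "p \<in> Pow (Pow V) \<times> Pow (Pow (Pow V))"
      using shallow_minor1_subset_Pow[of V E VH EH] by simp
  qed
  show "finite (Pow (Pow V) \<times> Pow (Pow (Pow V)))"
    using assms by simp
qed

lemma nabla1B_nonneg:
  assumes "finite V" and "v \<in> V"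
  shows "0 \<le> nabla1B V E"
proof -
  let ?density = "\<lambda>(VH, EH). real (card EH) / real (card VH)"
  let ?S = "{real (card EH) / real (card VH) | VH EH.
      shallow_minor1 V E VH EH \<and> bipartite VH EH \<and> VH \<noteq> {}}"
  have "?S \<subseteq> ?density ` {(VH, EH). shallow_minor1 V E VH EH}"
    by auto
  then have "finite ?S"
    using finite_shallow_minors1[OF assms(1)] finite_surj by blast
  moreover have "shallow_minor1 V E {{v}} {}" and "bipartite {{v}} ({} :: 'a set set set)"
    using assms(2) by (auto simp: shallow_minor1_def bipartite_def cnbh_def)
  then have "real (card ({} :: 'a set set set)) / real (card {{v}}) \<in> ?S"
    by blast
  then have "0 \<in> ?S"
    by simp
  ultimately show ?thesis
    unfolding nabla1B_def by (rule Max_ge)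
qed

lemma pigeonhole_Union:
  assumes "finite A" and "S \<subseteq> (\<Union>a\<in>A. f a)" and "card A * t < card S"
  shows "\<exists>a\<in>A. t < card (S \<inter> f a)"
proof (rule ccontr)
  assume "\<not> ?thesis"
  then have bound: "\<And>a. a \<in> A \<Longrightarrow> card (S \<inter> f a) \<le> t"
    by (simp add: not_less)
  have "S = (\<Union>a\<in>A. S \<inter> f a)"
    using assms(2) by blast
  then have "card S = card (\<Union>a\<in>A. S \<inter> f a)"
    by (rule arg_cong)
  also have "\<dots> \<le> (\<Sum>a\<in>A. card (S \<inter> f a))"
    by (rule card_UN_le[OF assms(1)])
  also have "\<dots> \<le> card A * t"
    using sum_bounded_above[of A "\<lambda>a. card (S \<inter> f a)" t] bound by simp
  finally show False
    using assms(3) by simp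
qed

lemma sgraph_no_loop:
  assumes "sgraph V E"
  shows "{x} \<notin> E"
  using assms unfolding sgraph_def by (metis doubleton_eq_iff insert_absorb2)

lemma has_K3t_if_common_nbhs:
  assumes "sgraph V E" and "{x, y, z} \<subseteq> V" and "card {x, y, z} = 3"
    and "Y \<subseteq> nbh V E x \<inter> nbh V E y \<inter> nbh V E z" and "card Y = t"
  shows "has_K3t V E t"
  unfolding has_K3t_def
proof (intro exI conjI)
  show "{x, y, z} \<inter> Y = {}"
    using assms(4) sgraph_no_loop[OF assms(1)] by (auto simp: nbh_def)
  show "\<forall>a\<in>{x, y, z}. \<forall>b\<in>Y. {a, b} \<in> E"
    using assms(4) by (auto simp: nbh_def insert_commute)
qed (use assms in \<open>auto simp: nbh_def\<close>)

lemma card_Int_cnbh_le: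
  assumes "finite S"
  shows "card (S \<inter> cnbh V E a) \<le> Suc (card (S \<inter> nbh V E a))"
proof -
  have "S \<inter> cnbh V E a \<subseteq> insert a (S \<inter> nbh V E a)"
    by (auto simp: cnbh_def)
  then have "card (S \<inter> cnbh V E a) \<le> card (insert a (S \<inter> nbh V E a))"
    using assms by (intro card_mono) auto
  also have "\<dots> \<le> Suc (card (S \<inter> nbh V E a))"
    using assms by (simp add: card_insert_if)
  finally show ?thesis .
qed

lemma mem_dominator_of_common_nbhs:
  assumes G: "sgraph V E" and "\<not> has_K3t V E t"
    and "v \<in> V" and "z \<in> V" and "z \<noteq> v"
    and S: "S \<subseteq> nbh V E v \<inter> nbh V E z" and "S \<subseteq> cnbh_set V E A"
    and A: "A \<subseteq> V - {v}" and "card A * t < card S"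
  shows "z \<in> A"
proof (rule ccontr)
  assume "z \<notin> A"
  have "finite V"
    using G by (simp add: sgraph_def)
  then have "finite A" and "finite S"
    using A S by (auto intro: finite_subset simp: nbh_def)
  moreover have "S \<subseteq> (\<Union>a\<in>A. cnbh V E a)"
    using assms(7) by (simp add: cnbh_set_def)
  ultimately obtain a where "a \<in> A" and "t < card (S \<inter> cnbh V E a)"
    using pigeonhole_Union assms(9) by meson
  then have "t \<le> card (S \<inter> nbh V E a)"
    using card_Int_cnbh_le[OF \<open>finite S\<close>, of V E a] by linarith
  then obtain Y where "Y \<subseteq> S \<inter> nbh V E a" and "card Y = t"
    by (meson obtain_subset_with_card_n)
  then have "Y \<subseteq> nbh V E v \<inter> nbh V E z \<inter> nbh V E a"
    using S by auto
  moreover have "a \<noteq> v" and "a \<noteq> z" and "a \<in> V"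
    using A \<open>a \<in> A\<close> \<open>z \<notin> A\<close> by auto
  then have "{v, z, a} \<subseteq> V" and "card {v, z, a} = 3"
    using assms(3-5) by auto
  ultimately have "has_K3t V E t"
    using has_K3t_if_common_nbhs[OF G] \<open>card Y = t\<close> by blast
  then show False
    using assms(2) by contradiction
qed

lemma Bset_subset_dominator:
  assumes "sgraph V E" and "\<not> has_K3t V E t" and "v \<in> V"
    and "A \<subseteq> V - {v}" and "int (card A) \<le> 2 * nabla - 1"
    and "NR1 V E nabla v \<subseteq> cnbh_set V E A"
  shows "Bset V E nabla t v \<subseteq> A"
proof
  fix z
  assume z: "z \<in> Bset V E nabla t v"
  let ?S = "NR1 V E nabla v \<inter> NR1 V E nabla z"
  have "int (card A * t) \<le> (2 * nabla - 1) * int t"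
    using assms(5) by (simp add: mult_right_mono)
  also have "\<dots> < int (card ?S)"
    using z by (simp add: Bset_def)
  finally have "card A * t < card ?S"
    by linarith
  moreover have "?S \<subseteq> nbh V E v \<inter> nbh V E z" and "?S \<subseteq> cnbh_set V E A"
    using assms(6) by (auto simp: NR1_def)
  moreover have "z \<in> V" and "z \<noteq> v"
    using z by (auto simp: Bset_def)
  ultimately show "z \<in> A"
    using mem_dominator_of_common_nbhs[OF assms(1-3)] assms(4) by blast
qed

lemma NR1_nonempty_if_in_Wset:
  assumes "0 < nabla" and "v \<in> Wset V E nabla t"
  shows "NR1 V E nabla v \<noteq> {}"
proof -
  obtain z where "int (card (NR1 V E nabla v \<inter> NR1 V E nabla z)) \<ge> (2 * nabla - 1) * int t + 1"
    using assms(2) by (auto simp: Wset_def Bset_def)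
  moreover have "0 \<le> (2 * nabla - 1) * int t"
    using assms(1) by simp
  ultimately have "0 < card (NR1 V E nabla v \<inter> NR1 V E nabla z)"
    by linarith
  then show ?thesis
    by auto
qed

lemma not_in_D1set_if_NR1_nonempty:
  assumes "NR1 V E nabla v \<noteq> {}"
  shows "v \<notin> D1set V E nabla"
proof
  assume v: "v \<in> D1set V E nabla"
  obtain u where "u \<in> nbh V E v" and "u \<notin> cnbh_set V E (D1set V E nabla)"
    using assms by (auto simp: NR1_def R1set_def)
  moreover have "u \<in> cnbh V E v"
    using \<open>u \<in> nbh V E v\<close> by (auto simp: cnbh_def nbh_def insert_commute)
  ultimately show False
    using v by (auto simp: cnbh_set_def)
qed

lemma card_Bset_le:
  assumes "sgraph V E" and "\<not> has_K3t V E t" and "0 < nabla" and W: "v \<in> Wset V E nabla t"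
  shows "int (card (Bset V E nabla t v)) \<le> 2 * nabla - 1"
proof -
  have "v \<in> V" and "finite V"
    using W assms(1) by (auto simp: Wset_def sgraph_def)
  obtain A where A: "A \<subseteq> V - {v}" "int (card A) \<le> 2 * nabla - 1" "nbh V E v \<subseteq> cnbh_set V E A"
    using not_in_D1set_if_NR1_nonempty[OF NR1_nonempty_if_in_Wset[OF assms(3) W]] \<open>v \<in> V\<close>
    by (auto simp: D1set_def not_less)
  have "finite A"
    using A(1) \<open>finite V\<close> by (auto intro: finite_subset)
  moreover have "Bset V E nabla t v \<subseteq> A"
    using A by (intro Bset_subset_dominator[OF assms(1,2) \<open>v \<in> V\<close>]) (auto simp: NR1_def)
  ultimately have "card (Bset V E nabla t v) \<le> card A"
    by (simp add: card_mono)
  then show ?thesis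
    using A(2) by linarith
qed

lemma Bset_subset_if_notin_Dhat:
  assumes "sgraph V E" and "\<not> has_K3t V E t" and "D \<subseteq> V" and "v \<in> V"
    and "v \<notin> Dhat V E D nabla"
  shows "Bset V E nabla t v \<subseteq> D"
proof -
  obtain A where A: "A \<subseteq> D - {v}" "int (card A) \<le> 2 * nabla - 1" "nbh V E v \<subseteq> cnbh_set V E A"
    using assms(4,5) by (auto simp: Dhat_def not_less)
  then have "Bset V E nabla t v \<subseteq> A"
    using assms(3) by (intro Bset_subset_dominator[OF assms(1,2,4)]) (auto simp: NR1_def)
  then show ?thesis
    using A(1) by auto
qed

theorem lemma30:
  fixes V :: "'a set" and E :: "'a set set" and t :: nat and D :: "'a set" and nabla :: int
  assumes "sgraph V E"
    and "t \<ge> 3"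
    and "\<not> has_K3t V E t"
    and "min_dominating V E D"
    and "real_of_int nabla > nabla1B V E"
  shows "\<forall>v\<in>Wset V E nabla t.
           (\<forall>Av. Av \<subseteq> V - {v} \<and> int (card Av) \<le> 2 * nabla - 1
                 \<and> NR1 V E nabla v \<subseteq> cnbh_set V E Av
                 \<longrightarrow> Bset V E nabla t v \<subseteq> Av)
         \<and> int (card (Bset V E nabla t v)) \<le> 2 * nabla - 1
         \<and> (v \<notin> Dhat V E D nabla \<longrightarrow> Bset V E nabla t v \<subseteq> D)"
proof (intro ballI conjI allI impI)
  fix v Av
  assume "v \<in> Wset V E nabla t"
    and "Av \<subseteq> V - {v} \<and> int (card Av) \<le> 2 * nabla - 1 \<and> NR1 V E nabla v \<subseteq> cnbh_set V E Av"
  then show "Bset V E nabla t v \<subseteq> Av"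
    by (intro Bset_subset_dominator[OF assms(1,3)]) (auto simp: Wset_def)
next
  fix v
  assume W: "v \<in> Wset V E nabla t"
  then have "v \<in> V"
    by (simp add: Wset_def)
  then have "0 < nabla"
    using nabla1B_nonneg[of V v E] assms(1,5) by (simp add: sgraph_def)
  then show "int (card (Bset V E nabla t v)) \<le> 2 * nabla - 1"
    using card_Bset_le[OF assms(1,3) _ W] by blast
next
  fix v
  assume "v \<in> Wset V E nabla t" and "v \<notin> Dhat V E D nabla"
  moreover have "D \<subseteq> V"
    using assms(4) by (simp add: min_dominating_def dominating_def)
  ultimately show "Bset V E nabla t v \<subseteq> D"
    using Bset_subset_if_notin_Dhat[OF assms(1,3)] by (simp add: Wset_def)
qed

end
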